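(* Let $m\ge2$, $G=CK(2m-1)$, and let $B$ be a blocker for the simple Hamiltonian paths of $G$ whose $m$ edges are parallel (or equal) to the boundary edges $[0,1],\dots,[m-1,m]$, one per direction. Let $[\alpha,\alpha+1]$ and $[m-\delta-1,m-\delta]$ be the first and last edges of $\langle0,1,\dots,m\rangle$ belonging to $B$, and suppose that $B$ misses exactly one edge $[\alpha+\beta,\alpha+\beta+1]$ of the boundary path $\langle\alpha,\dots,m-\delta\rangle$. Put $\gamma=m-\delta-\alpha-\beta-1$. Then there exists an integer $\nu$ with $1\le\nu<\min(\beta,\gamma)$ such that $[\alpha+\beta-\nu,\,\alpha+\beta+1+\nu]\in B$.
   Context: $CK(2m-1)$ is the complete convex geometric graph on $2m-1$ points in convex position, labelled clockwise $0,\dots,2m-2$ (elements of $\mathbb{Z}_{2m-1}$), with all segments as edges; boundary edges are $[i,i+1]$. The direction of $[i,j]$ is $i+j\pmod{2m-1}$; edges are parallel if they have the same direction. A simple Hamiltonian path (SHP) is a path through all vertices whose edges pairwise do not cross; a blocker for SHPs is an edge set of smallest possible size sharing an edge with every SHP. *)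

theory Defs
  imports Main
begin

text \<open>Complete convex geometric graph CK(n) on points 0..n-1 in convex position
(clockwise labelling). Edges are 2-element subsets of {0..<n}.\<close>

definition cvx_edges :: "nat \<Rightarrow> nat set set" where
  "cvx_edges n = {{i, j} | i j. i < n \<and> j < n \<and> i \<noteq> j}"

text \<open>Two segments between points in convex position cross iff their endpoints
strictly interleave in the cyclic (equivalently linear) order of labels.\<close>

definition crosses :: "nat set \<Rightarrow> nat set \<Rightarrow> bool" where
  "crosses e f \<longleftrightarrow> (\<exists>a b c d. a < c \<and> c < b \<and> b < d \<and>
      ((e = {a, b} \<and> f = {c, d}) \<or> (e = {c, d} \<and> f = {a, b})))"

definition is_SHP :: "nat \<Rightarrow> nat set set \<Rightarrow> bool" where
  "is_SHP n P \<longleftrightarrow> (\<exists>ps. distinct ps \<and> set ps = {0..<n} \<and>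
      P = {{ps ! k, ps ! (k + 1)} | k. k + 1 < length ps} \<and>
      (\<forall>e\<in>P. \<forall>f\<in>P. \<not> crosses e f))"

definition blocks_SHP :: "nat \<Rightarrow> nat set set \<Rightarrow> bool" where
  "blocks_SHP n B \<longleftrightarrow> (\<forall>P. is_SHP n P \<longrightarrow> B \<inter> P \<noteq> {})"

definition is_SHP_blocker :: "nat \<Rightarrow> nat set set \<Rightarrow> bool" where
  "is_SHP_blocker n B \<longleftrightarrow> B \<subseteq> cvx_edges n \<and> blocks_SHP n B \<and>
      (\<forall>B'. B' \<subseteq> cvx_edges n \<and> blocks_SHP n B' \<longrightarrow> card B \<le> card B')"

definition edge_dir :: "nat \<Rightarrow> nat set \<Rightarrow> nat" where
  "edge_dir n e = (\<Sum>e) mod n"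

end

theory Submission
  imports Defs
begin

(*
  Suppose no such \<nu> exists; we construct a simple Hamiltonian path avoiding B. Label the
  vertices by integers modulo n = 2m - 1. A walk on the integers in which every new vertex
  extends the interval of visited integers by one at either end becomes, modulo n, a simple
  Hamiltonian path. Let k = \<alpha> + \<beta>. If \<beta> \<le> \<gamma>, spiral outwards around the missing edge [k, k+1]:
  k, k+1, k-1, ..., k+\<beta>, k-\<beta> = \<alpha>; step to \<alpha> - 1 and keep spiralling around k - 1/2 up to
  k+\<gamma>+1 = m-\<delta>; then walk along the boundary. Its edges are the chords [k-t, k+1+t] with t < \<beta>,
  excluded by assumption; chords of the even direction 2k, which no edge of B has (their
  directions are 0 and the odd residues); chords parallel to the boundary edge [k-1, k] \<in> B, which is the only edge of B
  in its direction; and boundary edges outside the run [\<alpha>, m-\<delta>], which are not in B. If \<gamma> < \<beta>,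
  the mirror image x \<mapsto> 2k+1-x of the spiral with \<beta> and \<gamma> exchanged does the same job.
*)

section \<open>Crossing segments under rotation\<close>

lemma crosses_commute: "crosses e f \<longleftrightarrow> crosses f e"
  unfolding crosses_def by blast

lemma crosses_imp_between: "crosses e f \<Longrightarrow> \<exists>x\<in>f. \<exists>p q. e = {p, q} \<and> p < x \<and> x < q"
  unfolding crosses_def by blast

lemma crosses_rotate_Suc_interleaved:
  assumes "a < c" "c < b" "b < d" "d < n"
  shows "crosses {Suc a mod n, Suc b mod n} {Suc c mod n, Suc d mod n}"
proof (cases "Suc d < n")
  case True
  with assms have "crosses {Suc a, Suc b} {Suc c, Suc d}"
    unfolding crosses_def by blast
  with True assms show ?thesis by simp
next
  case False
  with assms(4) have "Suc d = n" by simp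
  with assms have "Suc d mod n = 0" "Suc b < n" by auto
  moreover have "crosses {Suc a, Suc b} {0, Suc c}"
    using assms unfolding crosses_def by blast
  ultimately show ?thesis
    using assms by (simp add: insert_commute)
qed

lemma crosses_rotate_Suc:
  assumes "crosses e f" "e \<subseteq> {..<n}" "f \<subseteq> {..<n}"
  shows "crosses ((\<lambda>x. Suc x mod n) ` e) ((\<lambda>x. Suc x mod n) ` f)"
proof -
  obtain a b c d where abcd: "a < c" "c < b" "b < d"
    and ef: "e = {a, b} \<and> f = {c, d} \<or> e = {c, d} \<and> f = {a, b}"
    using assms(1) unfolding crosses_def by blast
  then have "d < n" using assms(2,3) by auto
  from crosses_rotate_Suc_interleaved[OF abcd this] ef show ?thesis
    using crosses_commute by auto
qed

lemma crosses_rotate: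
  assumes "crosses e f" "e \<subseteq> {..<n}" "f \<subseteq> {..<n}"
  shows "crosses ((\<lambda>x. (x + t) mod n) ` e) ((\<lambda>x. (x + t) mod n) ` f)"
proof (induction t)
  case 0
  have "(\<lambda>x. (x + 0) mod n) ` A = A" if "A \<subseteq> {..<n}" for A
    using that by (force simp: image_iff)
  with assms show ?case by simp
next
  case (Suc t)
  have "(\<lambda>x. (x + Suc t) mod n) ` A = (\<lambda>x. Suc x mod n) ` (\<lambda>x. (x + t) mod n) ` A" for A
    by (auto simp: image_iff mod_Suc_eq)
  moreover have "0 < n" using assms unfolding crosses_def by auto
  ultimately show ?case
    by (simp only:) (rule crosses_rotate_Suc[OF Suc.IH]; auto)
qed

section \<open>Integer labels modulo n\<close>

definition wrap :: "nat \<Rightarrow> int \<Rightarrow> nat" where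
  "wrap n x = nat (x mod int n)"

lemma of_nat_wrap: "0 < n \<Longrightarrow> int (wrap n x) = x mod int n"
  by (simp add: wrap_def)

lemma wrap_less: "0 < n \<Longrightarrow> wrap n x < n"
  by (simp add: wrap_def nat_less_iff)

lemma wrap_of_nat: "x < n \<Longrightarrow> wrap n (int x) = x"
  by (simp add: wrap_def)

lemma wrap_add:
  assumes "0 < n"
  shows "wrap n (x + y) = (wrap n x + wrap n y) mod n"
proof -
  have "int (wrap n (x + y)) = int ((wrap n x + wrap n y) mod n)"
    using assms by (simp add: of_nat_wrap zmod_int mod_add_eq)
  then show ?thesis by simp
qed

lemma wrap_eq_imp_eq:
  assumes "wrap n x = wrap n y" "\<bar>x - y\<bar> < int n"
  shows "x = y"
proof -
  have "0 < n" using assms(2) by simp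
  then have "int n dvd x - y"
    using assms(1) by (metis of_nat_wrap mod_eq_dvd_iff)
  then show ?thesis
    using assms(2) dvd_imp_le_int[of "x - y" "int n"] by (cases "x = y") auto
qed

lemma wrap_neq: "x \<noteq> y \<Longrightarrow> \<bar>x - y\<bar> < int n \<Longrightarrow> wrap n x \<noteq> wrap n y"
  using wrap_eq_imp_eq by blast

lemma edge_dir_wrap:
  "0 < n \<Longrightarrow> wrap n x \<noteq> wrap n y \<Longrightarrow> edge_dir n {wrap n x, wrap n y} = wrap n (x + y)"
  by (simp add: edge_dir_def wrap_add)

section \<open>Outward paths\<close>

locale outward_path =
  fixes g lo hi :: "nat \<Rightarrow> int"
  assumes start: "lo 0 = g 0" "hi 0 = g 0"
    and extend: "\<And>i. g (Suc i) = hi i + 1 \<and> hi (Suc i) = g (Suc i) \<and> lo (Suc i) = lo i \<or>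
                      g (Suc i) = lo i - 1 \<and> lo (Suc i) = g (Suc i) \<and> hi (Suc i) = hi i"
begin

lemma interval_size: "lo i \<le> g i \<and> g i \<le> hi i \<and> hi i - lo i = int i"
proof (induction i)
  case (Suc i)
  then show ?case using extend[of i] by auto
qed (simp add: start)

lemma interval_mono: "i \<le> j \<Longrightarrow> lo j \<le> lo i \<and> hi i \<le> hi j"
proof (induction j rule: dec_induct)
  case (step j)
  then show ?case using extend[of j] interval_size[of j] by auto
qed simp

lemma visited_within: "i \<le> j \<Longrightarrow> lo j \<le> g i \<and> g i \<le> hi j"
  using interval_mono[of i j] interval_size[of i] by auto

lemma new_vertex_outside: "g (Suc j) < lo j \<or> hi j < g (Suc j)"
  using extend[of j] by auto

lemma inj_vertex:
  assumes "i < j"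
  shows "g i \<noteq> g j"
proof -
  obtain j' where "j = Suc j'" "i \<le> j'" using assms by (cases j) auto
  then show ?thesis using visited_within[of i j'] new_vertex_outside[of j'] by auto
qed

lemma later_vertex_not_between:
  assumes "Suc i < j"
  shows "\<not> (min (g i) (g (Suc i)) < g j \<and> g j < max (g i) (g (Suc i)))"
proof -
  obtain j' where "j = Suc j'" "Suc i \<le> j'" using assms by (cases j) auto
  then show ?thesis
    using visited_within[of i j'] visited_within[of "Suc i" j'] new_vertex_outside[of j']
    by (auto simp: min_def max_def)
qed

lemma shifted_edges_not_cross:
  assumes above: "\<And>i. i < n \<Longrightarrow> L \<le> g i" and ij: "Suc i < n" "Suc j < n"
  defines "h \<equiv> \<lambda>i. nat (g i - L)"
  shows "\<not> crosses {h i, h (Suc i)} {h j, h (Suc j)}"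
proof
  have no_cross: False
    if cross: "crosses {h i, h (Suc i)} {h j, h (Suc j)}" and ij: "i < j" "Suc j < n" for i j
  proof -
    obtain x p q where x: "x \<in> {h j, h (Suc j)}" and pq: "{h i, h (Suc i)} = {p, q}" "p < x" "x < q"
      using crosses_imp_between[OF cross] by blast
    obtain l where l: "x = h l" "l = j \<or> l = Suc j" using x by auto
    show False
    proof (cases "l = Suc i")
      case True
      then show False using pq l by auto
    next
      case False
      with l ij have "Suc i < l" "l < n" by auto
      with above[of i] above[of "Suc i"] above[of l] later_vertex_not_between[of i l] pq l(1)
      show False by (auto simp: h_def doubleton_eq_iff)
    qed
  qed
  assume cross: "crosses {h i, h (Suc i)} {h j, h (Suc j)}"
  consider "i < j" | "i = j" | "j < i" by linarith
  then show False
  proof cases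
    case 2
    with cross show False by (auto simp: crosses_def doubleton_eq_iff)
  qed (use no_cross cross ij crosses_commute in blast)+
qed

text \<open>The first n vertices lie in the window [L, L + n) with L = lo (n - 1), where reduction
  modulo n is a rotation of the order; rotations preserve crossings.\<close>

lemma is_SHP_wrap:
  assumes n: "0 < n"
  shows "is_SHP n {{wrap n (g i), wrap n (g (i + 1))} | i. i + 1 < n}"
proof -
  define L where "L = lo (n - 1)"
  have window: "L \<le> g i \<and> g i < L + int n" if "i < n" for i
  proof -
    have "i \<le> n - 1" using that by simp
    then show ?thesis
      using visited_within[of i "n - 1"] interval_size[of "n - 1"] n unfolding L_def by auto
  qed
  have wrap_inj: "i = j" if "wrap n (g i) = wrap n (g j)" "i < n" "j < n" for i j
  proof -
    have "\<bar>g i - g j\<bar> < int n" using window[OF that(2)] window[OF that(3)] by linarith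
    then have "g i = g j" by (rule wrap_eq_imp_eq[OF that(1)])
    then show ?thesis using inj_vertex[of i j] inj_vertex[of j i] by (cases i j rule: linorder_cases) auto
  qed
  define ps where "ps = map (\<lambda>i. wrap n (g i)) [0..<n]"
  have len: "length ps = n" and nth: "\<And>i. i < n \<Longrightarrow> ps ! i = wrap n (g i)"
    unfolding ps_def by simp_all
  have distinct: "distinct ps"
    unfolding distinct_conv_nth len using nth wrap_inj by auto
  have "set ps \<subseteq> {0..<n}" unfolding ps_def using wrap_less[OF n] by auto
  then have set: "set ps = {0..<n}"
    using card_subset_eq[of "{0..<n}" "set ps"] distinct_card[OF distinct] len by simp
  have edges: "{{ps ! i, ps ! (i + 1)} | i. i + 1 < length ps} =
      {{wrap n (g i), wrap n (g (i + 1))} | i. i + 1 < n}"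
    unfolding len using nth by (metis add_lessD1)
  define h where "h i = nat (g i - L)" for i
  define r where "r = n - wrap n L"
  have rotate: "(wrap n (g i) + r) mod n = h i" if "i < n" for i
  proof -
    have "int ((wrap n (g i) + r) mod n) = (g i mod int n - L mod int n + int n) mod int n"
      using n wrap_less[OF n, of L]
      by (simp add: r_def zmod_int of_nat_wrap of_nat_diff diff_add_eq[symmetric])
    also have "\<dots> = (g i mod int n - L mod int n) mod int n"
      by simp
    also have "\<dots> = g i - L"
      using window[OF that] by (simp add: mod_diff_eq)
    finally show ?thesis using window[OF that] unfolding h_def by simp
  qed
  have no_cross: "\<not> crosses {wrap n (g i), wrap n (g (i + 1))} {wrap n (g j), wrap n (g (j + 1))}"
    if "i + 1 < n" "j + 1 < n" for i j
  proof
    assume "crosses {wrap n (g i), wrap n (g (i + 1))} {wrap n (g j), wrap n (g (j + 1))}"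
    then have "crosses ((\<lambda>x. (x + r) mod n) ` {wrap n (g i), wrap n (g (i + 1))})
        ((\<lambda>x. (x + r) mod n) ` {wrap n (g j), wrap n (g (j + 1))})"
      by (rule crosses_rotate) (use wrap_less[OF n] in auto)
    then have "crosses {h i, h (Suc i)} {h j, h (Suc j)}"
      using rotate that by simp
    then show False
      using shifted_edges_not_cross[of n L i j] window that unfolding h_def by auto
  qed
  show ?thesis
    unfolding is_SHP_def using distinct set edges no_cross by (intro exI[of _ ps]) auto
qed

end

lemma outward_path_reflect:
  assumes "outward_path g lo hi"
  shows "outward_path (\<lambda>i. a - g i) (\<lambda>i. a - hi i) (\<lambda>i. a - lo i)"
proof
  interpret outward_path g lo hi by (fact assms)
  show "a - hi 0 = a - g 0" "a - lo 0 = a - g 0" using start by simp_all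
  show "a - g (Suc i) = a - lo i + 1 \<and> a - lo (Suc i) = a - g (Suc i) \<and> a - hi (Suc i) = a - hi i \<or>
        a - g (Suc i) = a - hi i - 1 \<and> a - hi (Suc i) = a - g (Suc i) \<and> a - lo (Suc i) = a - lo i" for i
    using extend[of i] by auto
qed

section \<open>The spiral\<close>

text \<open>The walk c, c+1, c-1, c+2, ..., c-b zigzags around c + 1/2; from there it zigzags around
  c - 1/2 through c-b-1, c+b+1, ..., c-d-1, c+d+1, and afterwards it only moves up.\<close>

definition spiral :: "int \<Rightarrow> nat \<Rightarrow> nat \<Rightarrow> nat \<Rightarrow> int" where
  "spiral c b d i =
    (if i \<le> 2 * b then (if even i then c - int (i div 2) else c + 1 + int (i div 2))
     else if i \<le> 2 * d + 2 then (if even i then c + int (i div 2) else c - 1 - int (i div 2))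
     else c + int i - int d - 1)"

definition spiral_lo :: "int \<Rightarrow> nat \<Rightarrow> nat \<Rightarrow> nat \<Rightarrow> int" where
  "spiral_lo c b d i =
    (if i \<le> 2 * b then c - int (i div 2)
     else if i \<le> 2 * d + 2 then c - int ((i + 1) div 2)
     else c - int d - 1)"

definition spiral_hi :: "int \<Rightarrow> nat \<Rightarrow> nat \<Rightarrow> nat \<Rightarrow> int" where
  "spiral_hi c b d i =
    (if i \<le> 2 * b then c + int ((i + 1) div 2)
     else if i \<le> 2 * d + 2 then c + int (i div 2)
     else c + int i - int d - 1)"

lemma outward_path_spiral:
  assumes "b \<le> d"
  shows "outward_path (spiral c b d) (spiral_lo c b d) (spiral_hi c b d)"
proof
  show "spiral_lo c b d 0 = spiral c b d 0" "spiral_hi c b d 0 = spiral c b d 0"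
    by (simp_all add: spiral_def spiral_lo_def spiral_hi_def)
  fix i :: nat
  obtain t where "i = 2 * t \<or> i = 2 * t + 1" by (metis evenE oddE)
  then show "spiral c b d (Suc i) = spiral_hi c b d i + 1 \<and>
      spiral_hi c b d (Suc i) = spiral c b d (Suc i) \<and> spiral_lo c b d (Suc i) = spiral_lo c b d i \<or>
    spiral c b d (Suc i) = spiral_lo c b d i - 1 \<and>
      spiral_lo c b d (Suc i) = spiral c b d (Suc i) \<and> spiral_hi c b d (Suc i) = spiral_hi c b d i"
  proof (elim disjE)
    assume "i = 2 * t"
    with assms show ?thesis by (auto simp: spiral_def spiral_lo_def spiral_hi_def; presburger)
  next
    assume i: "i = 2 * t + 1"
    then have "Suc i = 2 * (t + 1)" by simp
    with i assms show ?thesis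
      unfolding spiral_def spiral_lo_def spiral_hi_def by (simp; presburger)
  qed
qed

lemma spiral_edge_cases:
  assumes "b \<le> d"
  obtains (skew) t where "t < b" "{spiral c b d i, spiral c b d (i + 1)} = {c - int t, c + 1 + int t}"
    | (even) t where "t \<le> d" "{spiral c b d i, spiral c b d (i + 1)} = {c - 1 - int t, c + 1 + int t}"
    | (turn) "{spiral c b d i, spiral c b d (i + 1)} = {c - int b - 1, c - int b}"
    | (odd) t where "b < t" "t \<le> d" "{spiral c b d i, spiral c b d (i + 1)} = {c - 1 - int t, c + int t}"
    | (tail) "2 * d + 2 \<le> i" "spiral c b d i = c + int i - int d - 1"
        "spiral c b d (i + 1) = spiral c b d i + 1"
proof -
  obtain t where "i = 2 * t \<or> i = 2 * t + 1" by (metis evenE oddE)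
  then consider "i = 2 * t" "t < b" | "i = 2 * t + 1" "t < b" | "i = 2 * b"
    | "i = 2 * t + 1" "b \<le> t" "t \<le> d" | "i = 2 * t" "b < t" "t \<le> d" | "2 * d + 2 \<le> i"
    using assms by linarith
  then show ?thesis
  proof cases
    case 1
    with skew show ?thesis by (simp add: spiral_def insert_commute algebra_simps)
  next
    case 2
    with even[of t] assms show ?thesis by (simp add: spiral_def insert_commute algebra_simps)
  next
    case 3
    with turn assms show ?thesis by (simp add: spiral_def insert_commute algebra_simps)
  next
    case 4
    with even[of t] show ?thesis by (simp add: spiral_def insert_commute algebra_simps)
  next
    case 5
    with odd[of t] show ?thesis by (simp add: spiral_def insert_commute algebra_simps)
  next
    case 6
    with tail assms show ?thesis by (simp add: spiral_def insert_commute algebra_simps)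
  qed
qed

section \<open>Blockers whose boundary run has a single gap\<close>

locale blocker_gap =
  fixes m \<alpha> \<beta> \<delta> :: nat and B :: "nat set set"
  assumes m_ge_2: "2 \<le> m"
    and blocks: "blocks_SHP (2 * m - 1) B"
    and dir_inj: "inj_on (edge_dir (2 * m - 1)) B"
    and dir_odd: "edge_dir (2 * m - 1) ` B \<subseteq> {(2 * i + 1) mod (2 * m - 1) | i. i < m}"
    and first_in: "{\<alpha>, \<alpha> + 1} \<in> B"
    and before_first: "\<forall>i < \<alpha>. {i, i + 1} \<notin> B"
    and last_in: "{m - \<delta> - 1, m - \<delta>} \<in> B"
    and after_last: "\<forall>i. m - \<delta> \<le> i \<and> i < m \<longrightarrow> {i, i + 1} \<notin> B"
    and gap_less: "\<alpha> + \<beta> < m - \<delta>"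
    and gap_notin: "{\<alpha> + \<beta>, \<alpha> + \<beta> + 1} \<notin> B"
    and run_in: "\<forall>i. \<alpha> \<le> i \<and> i < m - \<delta> \<and> i \<noteq> \<alpha> + \<beta> \<longrightarrow> {i, i + 1} \<in> B"
begin

abbreviation "n \<equiv> 2 * m - 1"
abbreviation "k \<equiv> \<alpha> + \<beta>"
abbreviation "\<gamma> \<equiv> m - \<delta> - \<alpha> - \<beta> - 1"

lemma int_n: "int n = 2 * int m - 1"
  using m_ge_2 by simp

lemma n_pos: "0 < n"
  using m_ge_2 by simp

lemma beta_pos: "1 \<le> \<beta>"
  using first_in gap_notin by (cases \<beta>) auto

lemma gamma_pos: "1 \<le> \<gamma>"
proof (rule ccontr)
  assume "\<not> 1 \<le> \<gamma>"
  then have "k = m - \<delta> - 1" "k + 1 = m - \<delta>" using gap_less by auto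
  then show False using last_in gap_notin by simp
qed

lemma run_end: "int (m - \<delta>) = int k + int \<gamma> + 1" "int (m - \<delta>) \<le> int m"
  using gap_less by auto

lemmas arith_facts = int_n of_nat_add[of \<alpha> \<beta>] beta_pos gamma_pos run_end m_ge_2

lemma dir_even_imp_zero:
  assumes "e \<in> B" "even (edge_dir n e)"
  shows "edge_dir n e = 0"
proof -
  obtain i where i: "i < m" "edge_dir n e = (2 * i + 1) mod n"
    using dir_odd assms(1) by blast
  show ?thesis
  proof (cases "i + 1 < m")
    case True
    then have "edge_dir n e = 2 * i + 1" using i by simp
    with assms(2) show ?thesis by simp
  next
    case False
    with i m_ge_2 have "2 * i + 1 = n" by simp
    with i show ?thesis by simp
  qed
qed

lemma even_chord_notin:
  assumes "x < y" "y - x < int n" "x + y = 2 * s" "1 \<le> s" "s < int m"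
  shows "{wrap n x, wrap n y} \<notin> B"
proof
  assume inB: "{wrap n x, wrap n y} \<in> B"
  have "wrap n x \<noteq> wrap n y" using assms(1,2) by (intro wrap_neq) auto
  then have "edge_dir n {wrap n x, wrap n y} = wrap n (2 * s)"
    using assms(3) n_pos by (simp add: edge_dir_wrap)
  also have "\<dots> = nat (2 * s)"
    using assms(4,5) int_n by (simp add: wrap_def)
  finally have "edge_dir n {wrap n x, wrap n y} = nat (2 * s)" .
  moreover have "even (nat (2 * s))" "nat (2 * s) \<noteq> 0" using assms(4)
    by (simp_all add: nat_mult_distrib)
  ultimately show False using dir_even_imp_zero[OF inB] by simp
qed

lemma odd_chord_notin:
  assumes "x + y = 2 * int i + 1" "x < int i" "y - x < int n" "\<alpha> \<le> i" "i < m - \<delta>" "i \<noteq> k"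
  shows "{wrap n x, wrap n y} \<notin> B"
proof
  assume inB: "{wrap n x, wrap n y} \<in> B"
  have "i + 1 < n" using assms(5) m_ge_2 by linarith
  then have boundary: "{i, i + 1} = {wrap n (int i), wrap n (int i + 1)}"
    using wrap_of_nat[of i n] wrap_of_nat[of "i + 1" n, unfolded of_nat_add of_nat_1] by simp
  have "wrap n x \<noteq> wrap n y" "wrap n (int i) \<noteq> wrap n (int i + 1)"
    using assms(1-3) int_n by (intro wrap_neq; linarith)+
  then have "edge_dir n {wrap n x, wrap n y} = edge_dir n {i, i + 1}"
    unfolding boundary using assms(1) n_pos by (simp add: edge_dir_wrap)
  moreover have "{i, i + 1} \<in> B" using run_in assms(4-6) by blast
  ultimately have "{wrap n x, wrap n y} = {wrap n (int i), wrap n (int i + 1)}"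
    using inB dir_inj unfolding boundary by (auto dest: inj_onD)
  then have "wrap n x = wrap n (int i) \<or> wrap n x = wrap n (int i + 1)"
    by (auto simp: doubleton_eq_iff)
  moreover have "x \<noteq> int i" "x \<noteq> int i + 1" using assms(2) by auto
  ultimately show False
    using assms(1-3) int_n by (auto dest!: wrap_eq_imp_eq)
qed

lemma boundary_edge_notin:
  assumes "w < n" "w < \<alpha> \<or> m - \<delta> \<le> w"
  shows "{w, (w + 1) mod n} \<notin> B"
proof
  assume inB: "{w, (w + 1) mod n} \<in> B"
  consider "w < \<alpha>" | "m - \<delta> \<le> w" "w < m" | "m \<le> w" using assms(2) by linarith
  then show False
  proof cases
    case 1
    with gap_less have "(w + 1) mod n = w + 1" by simp
    with 1 inB before_first show False by auto
  next
    case 2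
    with m_ge_2 have "(w + 1) mod n = w + 1" by simp
    with 2 inB after_last show False by auto
  next
    case 3
    have "w \<noteq> (w + 1) mod n"
    proof (cases "w + 1 < n")
      case False
      with assms(1) have "w + 1 = n" by simp
      with 3 m_ge_2 show ?thesis by simp
    qed simp
    then have "edge_dir n {w, (w + 1) mod n} = (w + (w + 1)) mod n"
      by (simp add: edge_dir_def mod_add_right_eq)
    also have "\<dots> = 2 * (w + 1 - m)"
      using 3 assms(1) m_ge_2 by (simp add: le_mod_geq)
    finally show False
      using dir_even_imp_zero[OF inB] 3 by simp
  qed
qed

lemma wrap_outside_run:
  assumes "int (m - \<delta>) \<le> x \<and> x < int \<alpha> + int n \<or> int (m - \<delta>) - int n \<le> x \<and> x < int \<alpha>"
  shows "wrap n x < \<alpha> \<or> m - \<delta> \<le> wrap n x"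
proof -
  have window: "- int n \<le> x" "x < 2 * int n" using assms gap_less int_n by linarith+
  consider "x < 0" | "0 \<le> x" "x < int n" | "int n \<le> x" by linarith
  then show ?thesis
  proof cases
    case 1
    then have "wrap n x = nat (x + int n)"
      using window mod_pos_pos_trivial[of "x + int n" "int n"] by (simp add: wrap_def)
    with 1 assms show ?thesis by linarith
  next
    case 2
    then have "wrap n x = nat x" by (simp add: wrap_def)
    with 2 assms show ?thesis by linarith
  next
    case 3
    then have "wrap n x = nat (x - int n)"
      using window mod_pos_pos_trivial[of "x - int n" "int n"] by (simp add: wrap_def)
    with 3 assms show ?thesis by linarith
  qed
qed

lemma boundary_edge_wrap_notin:
  assumes "int (m - \<delta>) \<le> x \<and> x < int \<alpha> + int n \<or> int (m - \<delta>) - int n \<le> x \<and> x < int \<alpha>"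
  shows "{wrap n x, wrap n (x + 1)} \<notin> B"
proof -
  have "wrap n (x + 1) = (wrap n x + 1) mod n"
    using wrap_add[OF n_pos, of x 1] wrap_of_nat[of 1 n] m_ge_2 by simp
  then show ?thesis
    using boundary_edge_notin[OF wrap_less[OF n_pos] wrap_outside_run[OF assms]] by simp
qed

context
  assumes no_chord: "\<forall>\<nu>. 1 \<le> \<nu> \<and> \<nu> < min \<beta> \<gamma> \<longrightarrow> {k - \<nu>, k + 1 + \<nu>} \<notin> B"
begin

lemma skew_chord_notin:
  assumes t: "t < min \<beta> \<gamma>"
  shows "{wrap n (int k - int t), wrap n (int k + 1 + int t)} \<notin> B"
proof -
  have "k + 1 + t < n" using t gap_less m_ge_2 by linarith
  moreover have "int k - int t = int (k - t)" "int k + 1 + int t = int (k + 1 + t)"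
    using t by simp_all
  ultimately have "wrap n (int k - int t) = k - t" "wrap n (int k + 1 + int t) = k + 1 + t"
    using wrap_of_nat[of "k - t" n] wrap_of_nat[of "k + 1 + t" n] by (simp_all only:)
  then show ?thesis
    using no_chord t gap_notin by (cases "t = 0") auto
qed

lemma spiral_edge_notin:
  assumes "\<beta> \<le> \<gamma>" "i + 1 < n"
  shows "{wrap n (spiral (int k) \<beta> \<gamma> i), wrap n (spiral (int k) \<beta> \<gamma> (i + 1))} \<notin> B"
proof -
  have "wrap n ` {spiral (int k) \<beta> \<gamma> i, spiral (int k) \<beta> \<gamma> (i + 1)} \<notin> B"
    using \<open>\<beta> \<le> \<gamma>\<close>
  proof (cases rule: spiral_edge_cases[where c = "int k" and i = i])
    case (skew t)
    with skew_chord_notin[of t] \<open>\<beta> \<le> \<gamma>\<close> show ?thesis by simp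
  next
    case (even t)
    with even_chord_notin[of "int k - 1 - int t" "int k + 1 + int t" "int k"] arith_facts
    show ?thesis by simp
  next
    case turn
    with boundary_edge_wrap_notin[of "int \<alpha> - 1"] arith_facts show ?thesis by simp
  next
    case (odd t)
    with odd_chord_notin[of "int k - 1 - int t" "int k + int t" "k - 1"] arith_facts
    show ?thesis by simp
  next
    case tail
    have "2 * int \<gamma> + 2 \<le> int i" "int i + 1 < int n"
      using tail(1) \<open>i + 1 < n\<close> by linarith+
    with tail(2) arith_facts \<open>\<beta> \<le> \<gamma>\<close>
    have "int (m - \<delta>) \<le> spiral (int k) \<beta> \<gamma> i \<and> spiral (int k) \<beta> \<gamma> i < int \<alpha> + int n"
      by linarith
    with boundary_edge_wrap_notin tail(3) show ?thesis by simp
  qed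
  then show ?thesis by simp
qed

lemma reflected_spiral_edge_notin:
  assumes "\<gamma> < \<beta>" "i + 1 < n"
  shows "{wrap n (2 * int k + 1 - spiral (int k) \<gamma> \<beta> i),
          wrap n (2 * int k + 1 - spiral (int k) \<gamma> \<beta> (i + 1))} \<notin> B"
proof -
  have "wrap n ` (\<lambda>x. 2 * int k + 1 - x) ` {spiral (int k) \<gamma> \<beta> i, spiral (int k) \<gamma> \<beta> (i + 1)} \<notin> B"
    using less_imp_le[OF \<open>\<gamma> < \<beta>\<close>]
  proof (cases rule: spiral_edge_cases[where c = "int k" and i = i])
    case (skew t)
    with skew_chord_notin[of t] \<open>\<gamma> < \<beta>\<close> show ?thesis
      by (simp add: algebra_simps insert_commute)
  next
    case (even t)
    with even_chord_notin[of "int k - int t" "int k + 2 + int t" "int k + 1"] arith_facts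
    show ?thesis by (simp add: algebra_simps insert_commute)
  next
    case turn
    with boundary_edge_wrap_notin[of "int k + int \<gamma> + 1"] arith_facts show ?thesis
      by (simp add: algebra_simps insert_commute)
  next
    case (odd t)
    with odd_chord_notin[of "int k + 1 - int t" "int k + 2 + int t" "k + 1"] arith_facts
    show ?thesis by (simp add: algebra_simps insert_commute)
  next
    case tail
    have "2 * int \<beta> + 2 \<le> int i" "int i + 1 < int n" "int \<gamma> < int \<beta>"
      using tail(1) \<open>i + 1 < n\<close> \<open>\<gamma> < \<beta>\<close> by linarith+
    moreover have "2 * int k - spiral (int k) \<gamma> \<beta> i = int \<alpha> + 2 * int \<beta> + 1 - int i"
      using tail(2) by (simp add: algebra_simps)
    ultimately
    have "int (m - \<delta>) - int n \<le> 2 * int k - spiral (int k) \<gamma> \<beta> i \<and>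
        2 * int k - spiral (int k) \<gamma> \<beta> i < int \<alpha>"
      using arith_facts by linarith
    with boundary_edge_wrap_notin[of "2 * int k - spiral (int k) \<gamma> \<beta> i"] tail(3) show ?thesis
      by (simp add: algebra_simps insert_commute)
  qed
  then show ?thesis by simp
qed

end

lemma exists_chord: "\<exists>\<nu>. 1 \<le> \<nu> \<and> \<nu> < min \<beta> \<gamma> \<and> {k - \<nu>, k + 1 + \<nu>} \<in> B"
proof (rule ccontr)
  assume "\<nexists>\<nu>. 1 \<le> \<nu> \<and> \<nu> < min \<beta> \<gamma> \<and> {k - \<nu>, k + 1 + \<nu>} \<in> B"
  then have no_chord: "\<forall>\<nu>. 1 \<le> \<nu> \<and> \<nu> < min \<beta> \<gamma> \<longrightarrow> {k - \<nu>, k + 1 + \<nu>} \<notin> B"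
    by blast
  obtain g lo hi where path: "outward_path g lo hi"
    and avoids: "\<And>i. i + 1 < n \<Longrightarrow> {wrap n (g i), wrap n (g (i + 1))} \<notin> B"
  proof (cases "\<beta> \<le> \<gamma>")
    case True
    show thesis
      by (rule that[OF outward_path_spiral[OF True]]) (rule spiral_edge_notin[OF no_chord True])
  next
    case False
    then have "\<gamma> < \<beta>" by simp
    show thesis
      by (rule that[OF outward_path_reflect[OF outward_path_spiral[OF less_imp_le[OF \<open>\<gamma> < \<beta>\<close>]],
            where a = "2 * int k + 1"]])
        (rule reflected_spiral_edge_notin[OF no_chord \<open>\<gamma> < \<beta>\<close>])
  qed
  have "is_SHP n {{wrap n (g i), wrap n (g (i + 1))} | i. i + 1 < n}"
    by (rule outward_path.is_SHP_wrap[OF path n_pos])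
  with blocks avoids show False
    unfolding blocks_SHP_def by blast
qed

end

theorem proposition6:
  fixes m \<alpha> \<beta> \<delta> :: nat and B :: "nat set set"
  assumes m2: "m \<ge> 2"
    and blocker: "is_SHP_blocker (2 * m - 1) B"
    and card_B: "card B = m"
    and dirs: "bij_betw (edge_dir (2 * m - 1)) B
                 {(2 * i + 1) mod (2 * m - 1) | i. i < m}"
    and first: "\<alpha> < m" "{\<alpha>, \<alpha> + 1} \<in> B" "\<forall>i < \<alpha>. {i, i + 1} \<notin> B"
    and last: "\<delta> < m" "{m - \<delta> - 1, m - \<delta>} \<in> B"
              "\<forall>i. m - \<delta> \<le> i \<and> i < m \<longrightarrow> {i, i + 1} \<notin> B"
    and order: "\<alpha> \<le> m - \<delta> - 1"
    and miss: "\<alpha> + \<beta> < m - \<delta>" "{\<alpha> + \<beta>, \<alpha> + \<beta> + 1} \<notin> B"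
              "\<forall>i. \<alpha> \<le> i \<and> i < m - \<delta> \<and> i \<noteq> \<alpha> + \<beta> \<longrightarrow> {i, i + 1} \<in> B"
  shows "\<exists>\<nu>::nat. 1 \<le> \<nu> \<and> \<nu> < min \<beta> (m - \<delta> - \<alpha> - \<beta> - 1) \<and>
           {\<alpha> + \<beta> - \<nu>, \<alpha> + \<beta> + 1 + \<nu>} \<in> B"
proof -
  interpret blocker_gap m \<alpha> \<beta> \<delta> B
  proof
    show "blocks_SHP (2 * m - 1) B" using blocker by (simp add: is_SHP_blocker_def)
    show "inj_on (edge_dir (2 * m - 1)) B"
      "edge_dir (2 * m - 1) ` B \<subseteq> {(2 * i + 1) mod (2 * m - 1) | i. i < m}"
      using dirs by (simp_all add: bij_betw_def)
  qed (fact m2 first(2,3) last(2,3) miss)+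
  show ?thesis by (rule exists_chord)
qed

end
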